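(* Let $F$ be a PLSEM-function and $\sigma$ a permutation of $\{1,\dots,p\}$. For $x\in\mathbb{R}^p$ let $\Pi^\sigma_{i+1}(x)$ be the orthogonal projection onto $\mathrm{span}\{\partial_{\sigma^{-1}(i+1)}F(x),\dots,\partial_{\sigma^{-1}(p)}F(x)\}$ for $i<p$ and $\Pi^\sigma_{p+1}:=0$. If $(\mathrm{Id}-\Pi^\sigma_{i+1}(x))\,\partial^2_{\sigma^{-1}(i)}F(x)=0$ for all $x\in\mathbb{R}^p$ and $i=1,\dots,p$, then the matrices $\Pi^\sigma_{i+1}(x)$ and the vectors $(\mathrm{Id}-\Pi^\sigma_{i+1}(x))\,\partial_{\sigma^{-1}(i)}F(x)$ do not depend on $x$, for $i=1,\dots,p$.
   Context: A PLSEM with DAG $D$ on $\{1,\dots,p\}$ is a system $X_j=\mu_j+\sum_{i\in\mathrm{pa}_D(j)} f_{j,i}(X_i)+\varepsilon_j$, $j=1,\dots,p$, where $\mu_j\in\mathbb{R}$, $f_{j,i}\in C^2(\mathbb{R})$, $f_{j,i}\not\equiv 0$, $\mathbb{E}[f_{j,i}(X_i)]=0$, and $\varepsilon_1,\dots,\varepsilon_p$ are mutually independent with $\varepsilon_j\sim\mathcal{N}(0,\sigma_j^2)$, $\sigma_j^2>0$. Its PLSEM-function is $F(x)_j=\frac{1}{\sigma_j}\big(x_j-\mu_j-\sum_{i\in\mathrm{pa}_D(j)}f_{j,i}(x_i)\big)$. $\partial_kF$, $\partial_k^2F$ denote the vectors of first and second partial derivatives of the components of $F$ in $x_k$. *)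

theory Defs
  imports "HOL-Analysis.Analysis" "HOL-Probability.Probability"
begin

text \<open>Nodes of the DAG are the elements of a finite type 'n (p = CARD('n)).
  An edge (i,j) in D means i -> j.\<close>

definition pa :: "('n \<times> 'n) set \<Rightarrow> 'n \<Rightarrow> 'n set" where
  "pa D j = {i. (i, j) \<in> D}"

definition C2 :: "(real \<Rightarrow> real) \<Rightarrow> bool" where
  "C2 g \<longleftrightarrow> (\<exists>g' g''. (\<forall>x. (g has_real_derivative g' x) (at x)) \<and>
                      (\<forall>x. (g' has_real_derivative g'' x) (at x)) \<and> continuous_on UNIV g'')"

text \<open>The PLSEM with DAG D, intercepts mu, functions f j i (= f_{j,i}),
  noise standard deviations s j (= sigma_j > 0), noises eps and variables X
  on the probability space M.\<close>
definition plsem ::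
  "'a measure \<Rightarrow> ('n::finite \<times> 'n) set \<Rightarrow> ('n \<Rightarrow> real) \<Rightarrow> ('n \<Rightarrow> 'n \<Rightarrow> real \<Rightarrow> real)
    \<Rightarrow> ('n \<Rightarrow> real) \<Rightarrow> ('n \<Rightarrow> 'a \<Rightarrow> real) \<Rightarrow> ('n \<Rightarrow> 'a \<Rightarrow> real) \<Rightarrow> bool" where
  "plsem M D mu f s eps X \<longleftrightarrow>
     prob_space M \<and> acyclic D \<and>
     (\<forall>j. s j > 0) \<and>
     prob_space.indep_vars M (\<lambda>_. borel) eps UNIV \<and>
     (\<forall>j. distributed M lborel (eps j) (\<lambda>t. ennreal (normal_density 0 (s j) t))) \<and>
     (\<forall>j. X j \<in> borel_measurable M) \<and>
     (\<forall>j. \<forall>\<omega>\<in>space M. X j \<omega> = mu j + (\<Sum>i\<in>pa D j. f j i (X i \<omega>)) + eps j \<omega>) \<and>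
     (\<forall>j. \<forall>i\<in>pa D j. C2 (f j i) \<and> f j i \<noteq> (\<lambda>_. 0) \<and>
        integrable M (\<lambda>\<omega>. f j i (X i \<omega>)) \<and> integral\<^sup>L M (\<lambda>\<omega>. f j i (X i \<omega>)) = 0)"

definition plsem_fun ::
  "('n::finite \<times> 'n) set \<Rightarrow> ('n \<Rightarrow> real) \<Rightarrow> ('n \<Rightarrow> 'n \<Rightarrow> real \<Rightarrow> real) \<Rightarrow> ('n \<Rightarrow> real)
    \<Rightarrow> real^'n \<Rightarrow> real^'n" where
  "plsem_fun D mu f s x = (\<chi> j. (x $ j - mu j - (\<Sum>i\<in>pa D j. f j i (x $ i))) / s j)"

definition pd :: "'n::finite \<Rightarrow> (real^'n \<Rightarrow> real^'n) \<Rightarrow> real^'n \<Rightarrow> real^'n" where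
  "pd k G x = (\<chi> j. deriv (\<lambda>t. G (\<chi> l. if l = k then t else x $ l) $ j) (x $ k))"

definition pd2 :: "'n::finite \<Rightarrow> (real^'n \<Rightarrow> real^'n) \<Rightarrow> real^'n \<Rightarrow> real^'n" where
  "pd2 k G = pd k (pd k G)"

definition oproj :: "(real^'n::finite) set \<Rightarrow> real^'n \<Rightarrow> real^'n" where
  "oproj S v = (THE w. w \<in> span S \<and> (\<forall>u\<in>span S. inner (v - w) u = 0))"

text \<open>Pi^sigma_m(x) for m = i+1, 1 <= i <= p: projection onto the span of
  pd_{sigma^-1(m)} G x, ..., pd_{sigma^-1(p)} G x; and Pi^sigma_{p+1} = 0.
  Here sigma maps 'n bijectively onto {1..p}.\<close>
definition Pi_sigma :: "('n::finite \<Rightarrow> nat) \<Rightarrow> (real^'n \<Rightarrow> real^'n) \<Rightarrow> nat \<Rightarrow> real^'n \<Rightarrow> real^'n \<Rightarrow> real^'n" where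
  "Pi_sigma \<sigma> G m x = (if m = CARD('n) + 1 then (\<lambda>v. 0)
     else oproj {pd (inv_into UNIV \<sigma> k) G x | k. m \<le> k \<and> k \<le> CARD('n)})"

end

theory Submission
  imports Defs
begin

text \<open>The k-th partial derivative of a PLSEM-function depends on x only through the coordinate
  x_k, and its derivative in x_k is the second partial derivative. Put
  v_i(x) = (Id - \<Pi>_{i+1}(x)) \<partial>_{\<sigma>^{-1}(i)}F(x). If the span defining \<Pi>_{i+1} does not depend
  on x, then \<Pi>_{i+1} is a fixed linear map P, so v_i(x) = (Id - P) c(x_k) for a curve c whose
  derivative is annihilated by Id - P by hypothesis; hence v_i is constant. Since v_i differs from
  \<partial>_{\<sigma>^{-1}(i)}F(x) by an element of that span, the span defining \<Pi>_i is constant as well,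
  and a downward induction on i starting from the empty span yields the claim.\<close>

lemma oproj_unique:
  fixes S :: "(real^'n::finite) set"
  assumes "w1 \<in> span S" "\<forall>u\<in>span S. inner (v - w1) u = 0"
    and "w2 \<in> span S" "\<forall>u\<in>span S. inner (v - w2) u = 0"
  shows "w1 = w2"
proof -
  have "w1 - w2 \<in> span S" using assms by (simp add: span_diff)
  then have "inner (v - w2) (w1 - w2) - inner (v - w1) (w1 - w2) = 0" using assms by simp
  then have "inner (w1 - w2) (w1 - w2) = 0" by (simp add: inner_diff_left)
  then show ?thesis by simp
qed

lemma oproj_in_span_orthogonal:
  fixes S :: "(real^'n::finite) set"
  shows "oproj S v \<in> span S \<and> (\<forall>u\<in>span S. inner (v - oproj S v) u = 0)"
proof -
  obtain y z where "y \<in> span S" "\<And>w. w \<in> span S \<Longrightarrow> orthogonal z w" "v = y + z"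
    using orthogonal_subspace_decomp_exists by blast
  then have "\<exists>w. w \<in> span S \<and> (\<forall>u\<in>span S. inner (v - w) u = 0)"
    by (auto simp: orthogonal_def)
  then have "\<exists>!w. w \<in> span S \<and> (\<forall>u\<in>span S. inner (v - w) u = 0)"
    using oproj_unique[of _ S v] by blast
  then show ?thesis unfolding oproj_def by (rule theI')
qed

lemma oproj_eqI:
  fixes S :: "(real^'n::finite) set"
  assumes "w \<in> span S" "\<forall>u\<in>span S. inner (v - w) u = 0"
  shows "oproj S v = w"
  using oproj_in_span_orthogonal[of S v] oproj_unique[OF _ _ assms] by blast

lemma linear_oproj: "linear (oproj (S :: (real^'n::finite) set))"
proof (rule linearI)
  fix x y
  show "oproj S (x + y) = oproj S x + oproj S y"
    using oproj_in_span_orthogonal[of S x] oproj_in_span_orthogonal[of S y]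
    by (intro oproj_eqI) (auto simp: span_add inner_diff_left inner_add_left algebra_simps)
next
  fix c x
  show "oproj S (c *\<^sub>R x) = c *\<^sub>R oproj S x"
    using oproj_in_span_orthogonal[of S x]
    by (intro oproj_eqI) (auto simp: span_scale inner_diff_left algebra_simps)
qed

lemma oproj_empty: "oproj {} = (\<lambda>v. 0 :: real^'n::finite)"
  by (rule ext, rule oproj_eqI) auto

lemma oproj_cong_span: "span S = span T \<Longrightarrow> oproj S = oproj T"
  unfolding oproj_def by (simp add: fun_eq_iff)

lemma Pi_sigma_eq_oproj:
  fixes \<sigma> :: "'n::finite \<Rightarrow> nat"
  assumes "m \<le> CARD('n) + 1"
  shows "Pi_sigma \<sigma> G m x = oproj ((\<lambda>k. pd (inv_into UNIV \<sigma> k) G x) ` {m..CARD('n)})"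
proof (cases "m = CARD('n) + 1")
  case True
  then show ?thesis by (simp add: Pi_sigma_def oproj_empty)
next
  case False
  have "{pd (inv_into UNIV \<sigma> k) G x | k. m \<le> k \<and> k \<le> CARD('n)}
      = (\<lambda>k. pd (inv_into UNIV \<sigma> k) G x) ` {m..CARD('n)}"
    by auto
  with False show ?thesis by (simp add: Pi_sigma_def)
qed

lemma span_image_constant_downward:
  fixes w :: "nat \<Rightarrow> 'a \<Rightarrow> real^'n::finite"
  assumes residual_constant: "\<And>i x y. \<lbrakk>1 \<le> i; i \<le> p;
      \<And>u v. span ((\<lambda>k. w k u) ` {Suc i..p}) = span ((\<lambda>k. w k v) ` {Suc i..p})\<rbrakk> \<Longrightarrow>
      w i x - oproj ((\<lambda>k. w k x) ` {Suc i..p}) (w i x)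
        = w i y - oproj ((\<lambda>k. w k y) ` {Suc i..p}) (w i y)"
    and "1 \<le> m"
  shows "span ((\<lambda>k. w k x) ` {m..p}) = span ((\<lambda>k. w k y) ` {m..p})"
proof (cases "m \<le> p")
  case False
  then show ?thesis by simp
next
  case True
  let ?S = "\<lambda>n x. (\<lambda>k. w k x) ` {n..p}"
  have "m \<le> Suc p" using True by simp
  then have "\<forall>x y. span (?S m x) = span (?S m y)"
  proof (induction rule: inc_induct)
    case base
    then show ?case by simp
  next
    case (step n)
    let ?v = "\<lambda>x. w n x - oproj (?S (Suc n) x) (w n x)"
    have span_shift: "span (?S n x) = span (insert (?v x) (?S (Suc n) x))" for x
    proof -
      have "?S n x = insert (w n x) (?S (Suc n) x)"
        using step.hyps by (simp add: Icc_eq_insert_lb_nat)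
      moreover have "w n x - ?v x \<in> span (?S (Suc n) x)"
        using oproj_in_span_orthogonal by force
      ultimately show ?thesis by (simp add: eq_span_insert_eq)
    qed
    have v_constant: "?v x = ?v y" for x y
      using residual_constant step \<open>1 \<le> m\<close> by simp
    show ?case
    proof (intro allI)
      fix x y
      show "span (?S n x) = span (?S n y)"
        unfolding span_shift v_constant[of x y] span_insert
        using step.IH[rule_format, of x y] by simp
    qed
  qed
  then show ?thesis by blast
qed

lemma vec_lambda_has_vector_derivative:
  fixes c :: "real \<Rightarrow> 'n::finite \<Rightarrow> real"
  assumes "\<And>j. ((\<lambda>t. c t j) has_real_derivative c' j) (at \<tau>)"
  shows "((\<lambda>t. \<chi> j. c t j) has_vector_derivative (\<chi> j. c' j)) (at \<tau>)"
proof -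
  have vec_eq_sum: "(\<chi> j. a j) = (\<Sum>j\<in>UNIV. a j *\<^sub>R axis j (1::real))" for a :: "'n \<Rightarrow> real"
    by (simp add: vec_eq_iff axis_def sum.delta if_distrib cong: if_cong)
  have "((\<lambda>t. \<Sum>j\<in>UNIV. c t j *\<^sub>R axis j (1::real)) has_vector_derivative
        (\<Sum>j\<in>UNIV. c \<tau> j *\<^sub>R 0 + c' j *\<^sub>R axis j 1)) (at \<tau>)"
    by (intro has_vector_derivative_sum has_vector_derivative_scaleR assms
        has_vector_derivative_const)
  then show ?thesis by (simp flip: vec_eq_sum)
qed

lemma linear_residual_constant:
  fixes c :: "real \<Rightarrow> 'a::euclidean_space"
  assumes "linear P"
    and "\<And>t. (c has_vector_derivative c' t) (at t)"
    and "\<And>t. P (c' t) = c' t"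
  shows "c t - P (c t) = c u - P (c u)"
proof -
  have "bounded_linear P" using assms(1) linear_conv_bounded_linear by blast
  then have "((\<lambda>t. c t - P (c t)) has_vector_derivative c' t - P (c' t)) (at t)" for t
    by (rule has_vector_derivative_diff[OF assms(2)
          bounded_linear.has_vector_derivative[OF _ assms(2)]])
  then have "((\<lambda>t. c t - P (c t)) has_vector_derivative 0) (at t within UNIV)"
    if "t \<in> UNIV" for t
    by (simp add: assms(3))
  then obtain r where "\<And>t. t \<in> UNIV \<Longrightarrow> c t - P (c t) = r"
    using has_vector_derivative_zero_constant[OF convex_UNIV, of "\<lambda>t. c t - P (c t)"] by metis
  then show ?thesis by simp
qed

text \<open>Closed forms of \<partial>_kF(x) and \<partial>^2_kF(x) in terms of t = x_k, where g j i is the first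
  resp. second derivative of f_{j,i}.\<close>

definition plsem_pd ::
  "('n::finite \<times> 'n) set \<Rightarrow> ('n \<Rightarrow> 'n \<Rightarrow> real \<Rightarrow> real) \<Rightarrow> ('n \<Rightarrow> real) \<Rightarrow> 'n \<Rightarrow> real \<Rightarrow> real^'n"
  where "plsem_pd D g s k t =
    (\<chi> j. ((if j = k then 1 else 0) - (if k \<in> pa D j then g j k t else 0)) / s j)"

definition plsem_pd2 ::
  "('n::finite \<times> 'n) set \<Rightarrow> ('n \<Rightarrow> 'n \<Rightarrow> real \<Rightarrow> real) \<Rightarrow> ('n \<Rightarrow> real) \<Rightarrow> 'n \<Rightarrow> real \<Rightarrow> real^'n"
  where "plsem_pd2 D g s k t = (\<chi> j. - (if k \<in> pa D j then g j k t else 0) / s j)"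

lemma plsem_fun_has_partial_derivative:
  fixes D :: "('n::finite \<times> 'n) set"
  assumes "\<forall>j. \<forall>i\<in>pa D j. \<forall>t. (f j i has_real_derivative g j i t) (at t)"
  shows "((\<lambda>t. plsem_fun D mu f s (\<chi> l. if l = k then t else x $ l) $ j) has_real_derivative
    plsem_pd D g s k \<tau> $ j) (at \<tau>)"
proof -
  have "((\<lambda>t. \<Sum>i\<in>pa D j. f j i (if i = k then t else x $ i)) has_real_derivative
      (\<Sum>i\<in>pa D j. if i = k then g j i \<tau> else 0)) (at \<tau>)"
  proof (rule DERIV_sum)
    fix i assume "i \<in> pa D j"
    then show "((\<lambda>t. f j i (if i = k then t else x $ i)) has_real_derivative
        (if i = k then g j i \<tau> else 0)) (at \<tau>)"
      using assms by (cases "i = k") auto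
  qed
  moreover have "((\<lambda>t. if j = k then t else x $ j) has_real_derivative
      (if j = k then 1 else 0)) (at \<tau>)"
    by (cases "j = k") (auto intro!: derivative_eq_intros)
  ultimately have "((\<lambda>t. ((if j = k then t else x $ j) - mu j
        - (\<Sum>i\<in>pa D j. f j i (if i = k then t else x $ i))) / s j)
      has_real_derivative ((if j = k then 1 else 0) - 0
        - (\<Sum>i\<in>pa D j. if i = k then g j i \<tau> else 0)) / s j) (at \<tau>)"
    by (intro DERIV_cdivide DERIV_diff DERIV_const)
  then show ?thesis
    by (simp add: plsem_fun_def plsem_pd_def sum.delta')
qed

lemma pd_plsem_fun:
  fixes D :: "('n::finite \<times> 'n) set"
  assumes "\<forall>j. \<forall>i\<in>pa D j. \<forall>t. (f j i has_real_derivative g j i t) (at t)"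
  shows "pd k (plsem_fun D mu f s) x = plsem_pd D g s k (x $ k)"
  using DERIV_imp_deriv[OF plsem_fun_has_partial_derivative[OF assms]]
  by (simp add: pd_def vec_eq_iff)

lemma plsem_pd_has_real_derivative:
  fixes D :: "('n::finite \<times> 'n) set"
  assumes "\<forall>j. \<forall>i\<in>pa D j. \<forall>t. (g j i has_real_derivative h j i t) (at t)"
  shows "((\<lambda>t. plsem_pd D g s k t $ j) has_real_derivative plsem_pd2 D h s k \<tau> $ j) (at \<tau>)"
proof (cases "k \<in> pa D j")
  case True
  then have "(g j k has_real_derivative h j k \<tau>) (at \<tau>)" using assms by blast
  then have "((\<lambda>t. ((if j = k then 1 else 0) - g j k t) / s j) has_real_derivative
      (0 - h j k \<tau>) / s j) (at \<tau>)"
    by (intro DERIV_cdivide DERIV_diff DERIV_const)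
  with True show ?thesis by (simp add: plsem_pd_def plsem_pd2_def)
next
  case False
  then show ?thesis by (simp add: plsem_pd_def plsem_pd2_def)
qed

lemma pd2_plsem_fun:
  fixes D :: "('n::finite \<times> 'n) set"
  assumes "\<forall>j. \<forall>i\<in>pa D j. \<forall>t. (f j i has_real_derivative g j i t) (at t)"
    and "\<forall>j. \<forall>i\<in>pa D j. \<forall>t. (g j i has_real_derivative h j i t) (at t)"
  shows "pd2 k (plsem_fun D mu f s) x = plsem_pd2 D h s k (x $ k)"
  using DERIV_imp_deriv[OF plsem_pd_has_real_derivative[OF assms(2)]]
  by (simp add: pd2_def pd_def[of k "pd k _"] vec_eq_iff pd_plsem_fun[OF assms(1)])

lemma plsem_fun_partials:
  fixes D :: "('n::finite \<times> 'n) set"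
  assumes "\<forall>j. \<forall>i\<in>pa D j. C2 (f j i)"
  obtains c c' :: "real \<Rightarrow> real^'n"
  where "\<And>x. pd k (plsem_fun D mu f s) x = c (x $ k)"
    and "\<And>x. pd2 k (plsem_fun D mu f s) x = c' (x $ k)"
    and "\<And>t. (c has_vector_derivative c' t) (at t)"
proof -
  have "\<forall>j i. \<exists>g' g''. i \<in> pa D j \<longrightarrow> (\<forall>t. (f j i has_real_derivative g' t) (at t))
      \<and> (\<forall>t. (g' has_real_derivative g'' t) (at t))"
    using assms unfolding C2_def by blast
  then obtain g h where "\<forall>j i. i \<in> pa D j \<longrightarrow> (\<forall>t. (f j i has_real_derivative g j i t) (at t))
      \<and> (\<forall>t. (g j i has_real_derivative h j i t) (at t))"
    by metis
  then have g: "\<forall>j. \<forall>i\<in>pa D j. \<forall>t. (f j i has_real_derivative g j i t) (at t)"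
    and h: "\<forall>j. \<forall>i\<in>pa D j. \<forall>t. (g j i has_real_derivative h j i t) (at t)"
    by blast+
  have "(plsem_pd D g s k has_vector_derivative plsem_pd2 D h s k t) (at t)" for t
    using vec_lambda_has_vector_derivative[of "\<lambda>t j. plsem_pd D g s k t $ j",
        OF plsem_pd_has_real_derivative[OF h]]
    by simp
  with pd_plsem_fun[OF g] pd2_plsem_fun[OF g h] show thesis by (rule that)
qed

lemma plsem_residual_constant:
  fixes D :: "('n::finite \<times> 'n) set" and mu s :: "'n \<Rightarrow> real"
    and f :: "'n \<Rightarrow> 'n \<Rightarrow> real \<Rightarrow> real" and S :: "real^'n \<Rightarrow> (real^'n) set"
  defines "F \<equiv> plsem_fun D mu f s"
  assumes "\<forall>j. \<forall>i\<in>pa D j. C2 (f j i)"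
    and span_constant: "\<And>x y. span (S x) = span (S y)"
    and "\<And>x. pd2 k F x - oproj (S x) (pd2 k F x) = 0"
  shows "pd k F x - oproj (S x) (pd k F x) = pd k F y - oproj (S y) (pd k F y)"
proof -
  obtain c c' where c: "\<And>x. pd k F x = c (x $ k)" and c': "\<And>x. pd2 k F x = c' (x $ k)"
    and deriv: "\<And>t. (c has_vector_derivative c' t) (at t)"
    using plsem_fun_partials[OF assms(2)] unfolding F_def by blast
  define P where "P = oproj (S 0)"
  have P: "oproj (S x) = P" for x
    unfolding P_def using span_constant by (rule oproj_cong_span)
  have "P (c' t) = c' t" for t
    using assms(4)[of "\<chi> l. if l = k then t else 0"] by (simp add: P c')
  with linear_oproj deriv have "c t - P (c t) = c u - P (c u)" for t u
    unfolding P_def by (rule linear_residual_constant)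
  then show ?thesis by (simp add: P c)
qed

theorem mainTheorem14:
  fixes M :: "'a measure" and D :: "('n::finite \<times> 'n) set"
    and mu s :: "'n \<Rightarrow> real" and f :: "'n \<Rightarrow> 'n \<Rightarrow> real \<Rightarrow> real"
    and eps X :: "'n \<Rightarrow> 'a \<Rightarrow> real" and \<sigma> :: "'n \<Rightarrow> nat"
  assumes "plsem M D mu f s eps X"
    and "bij_betw \<sigma> UNIV {1..CARD('n)}"
    and "\<forall>x. \<forall>i\<in>{1..CARD('n)}.
           pd2 (inv_into UNIV \<sigma> i) (plsem_fun D mu f s) x
           - Pi_sigma \<sigma> (plsem_fun D mu f s) (i + 1) x
               (pd2 (inv_into UNIV \<sigma> i) (plsem_fun D mu f s) x) = 0"
  shows "\<forall>i\<in>{1..CARD('n)}. \<forall>x y.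
           matrix (Pi_sigma \<sigma> (plsem_fun D mu f s) (i + 1) x)
             = matrix (Pi_sigma \<sigma> (plsem_fun D mu f s) (i + 1) y)
         \<and> pd (inv_into UNIV \<sigma> i) (plsem_fun D mu f s) x
             - Pi_sigma \<sigma> (plsem_fun D mu f s) (i + 1) x
                 (pd (inv_into UNIV \<sigma> i) (plsem_fun D mu f s) x)
           = pd (inv_into UNIV \<sigma> i) (plsem_fun D mu f s) y
             - Pi_sigma \<sigma> (plsem_fun D mu f s) (i + 1) y
                 (pd (inv_into UNIV \<sigma> i) (plsem_fun D mu f s) y)"
proof -
  let ?F = "plsem_fun D mu f s" and ?p = "CARD('n)"
  define w where "w k x = pd (inv_into UNIV \<sigma> k) ?F x" for k x
  define S where "S i x = (\<lambda>k. w k x) ` {Suc i..?p}" for i x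
  have C2: "\<forall>j. \<forall>i\<in>pa D j. C2 (f j i)"
    using assms(1) unfolding plsem_def by blast
  have Pi: "Pi_sigma \<sigma> ?F (i + 1) x = oproj (S i x)" if "i \<le> ?p" for i x
    using Pi_sigma_eq_oproj[of "i + 1"] that unfolding S_def w_def by simp
  have residual_constant: "w i x - oproj (S i x) (w i x) = w i y - oproj (S i y) (w i y)"
    if "1 \<le> i" "i \<le> ?p" "\<And>u v. span (S i u) = span (S i v)" for i x y
    using plsem_residual_constant[OF C2, of "S i"] assms(3) that Pi unfolding w_def by simp
  have span_constant: "span (S i x) = span (S i y)" for i x y
    unfolding S_def
    by (rule span_image_constant_downward) (use residual_constant in \<open>simp_all add: S_def\<close>)
  show ?thesis
  proof (intro ballI allI conjI)
    fix i x y assume "i \<in> {1..?p}"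
    then have "1 \<le> i" "i \<le> ?p" and Pi_i: "\<And>z. Pi_sigma \<sigma> ?F (i + 1) z = oproj (S i z)"
      using Pi by auto
    show "matrix (Pi_sigma \<sigma> ?F (i + 1) x) = matrix (Pi_sigma \<sigma> ?F (i + 1) y)"
      unfolding Pi_i oproj_cong_span[OF span_constant[of i x y]] ..
    show "pd (inv_into UNIV \<sigma> i) ?F x - Pi_sigma \<sigma> ?F (i + 1) x (pd (inv_into UNIV \<sigma> i) ?F x)
        = pd (inv_into UNIV \<sigma> i) ?F y - Pi_sigma \<sigma> ?F (i + 1) y (pd (inv_into UNIV \<sigma> i) ?F y)"
      using residual_constant[OF \<open>1 \<le> i\<close> \<open>i \<le> ?p\<close> span_constant] unfolding Pi_i w_def .
  qed
qed

end
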